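(* Let $n\ge 2$ be an even integer and let $K$ be a bounded convex body in $\mathbb R^n$ with $C^\infty$ boundary $\partial K$. Suppose that $P(\xi,t)$ and $q(\xi,t)$ are continuous in $\xi\in S^{n-1}$ and polynomials in $t$, with $\deg q(\xi,\cdot)=2$ and $q(\xi,t)>0$ for $t\in I_\xi=\big(h_K^-(\xi),h_K^+(\xi)\big)$, and that either $A_K(\xi,t)=\sqrt{q(\xi,t)}\,P(\xi,t)$ for all $\xi\in S^{n-1}$, $t\in I_\xi$, or $A_K(\xi,t)=P(\xi,t)/\sqrt{q(\xi,t)}$ for all $\xi\in S^{n-1}$, $t\in I_\xi$. Then there is a function $q_0$ on $S^{n-1}$ such that $q(\xi,t)=q_0(\xi)\big(h_K^+(\xi)-t\big)\big(t-h_K^-(\xi)\big)$ for all $\xi \in S^{n-1}$ and $t$.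
   Context: For a bounded domain $K\subset\mathbb R^n$, $A_K(\xi,t)$ denotes the $(n-1)$-dimensional volume of $K\cap\{x\cdot\xi=t\}$, for $\xi\in S^{n-1}$, $t\in\mathbb R$. The support functions are $h_K^+(\xi)=\max_{x\in K}x\cdot\xi$ and $h_K^-(\xi)=\min_{x\in K}x\cdot\xi$. *)

theory Defs
  imports "HOL-Analysis.Analysis" "HOL-Probability.Probability"
    "HOL-Computational_Algebra.Polynomial"
begin

fun Ck_on :: "nat \<Rightarrow> ('a::euclidean_space \<Rightarrow> real) \<Rightarrow> 'a set \<Rightarrow> bool" where
  "Ck_on 0 f U = continuous_on U f"
| "Ck_on (Suc k) f U =
     (\<exists>g. (\<forall>x\<in>U. (f has_derivative (\<lambda>h. g x \<bullet> h)) (at x)) \<and>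
          (\<forall>i\<in>Basis. Ck_on k (\<lambda>x. g x \<bullet> i) U))"

definition smooth_fun_on :: "('a::euclidean_space \<Rightarrow> real) \<Rightarrow> 'a set \<Rightarrow> bool" where
  "smooth_fun_on f U \<longleftrightarrow> (\<forall>k. Ck_on k f U)"

definition smooth_boundary :: "'a::euclidean_space set \<Rightarrow> bool" where
  "smooth_boundary K \<longleftrightarrow>
     (\<forall>x\<in>frontier K. \<exists>U f g. open U \<and> x \<in> U \<and> smooth_fun_on f U \<and>
        (\<forall>y\<in>U. (f has_derivative (\<lambda>h. g y \<bullet> h)) (at y) \<and> g y \<noteq> 0) \<and>
        K \<inter> U = {y\<in>U. f y \<le> 0})"

definition convex_body :: "'a::euclidean_space set \<Rightarrow> bool" where
  "convex_body K \<longleftrightarrow> compact K \<and> convex K \<and> interior K \<noteq> {}"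

definition supp_plus :: "'a::euclidean_space set \<Rightarrow> 'a \<Rightarrow> real" where
  "supp_plus K \<xi> = (SUP x\<in>K. x \<bullet> \<xi>)"

definition supp_minus :: "'a::euclidean_space set \<Rightarrow> 'a \<Rightarrow> real" where
  "supp_minus K \<xi> = (INF x\<in>K. x \<bullet> \<xi>)"

text \<open>(n-1)-dimensional volume of the hyperplane section K \<inter> {x. x\<bullet>\<xi> = t}:
  rotate \<xi> onto a coordinate axis a by an orthogonal transformation Q, drop the
  a-th coordinate and take Lebesgue measure on the remaining n-1 coordinates.
  (For unit \<xi> this is independent of the choice of Q and a.)\<close>
definition section_area :: "(real^'n) set \<Rightarrow> real^'n \<Rightarrow> real \<Rightarrow> real" where
  "section_area K \<xi> t =
    (let a = (SOME a::'n. True);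
         Q = (SOME Q. orthogonal_transformation Q \<and> Q \<xi> = axis a (1::real))
     in measure (PiM (UNIV - {a}) (\<lambda>_. lborel))
          ((\<lambda>y. restrict (\<lambda>i. y $ i) (UNIV - {a})) ` Q ` (K \<inter> {x. x \<bullet> \<xi> = t})))"

end

theory Submission
  imports Defs
begin

text \<open>
  Say that K is touched at p with outer unit normal \<eta> if K lies in a closed ball of
  some radius R whose boundary passes through p with outer normal \<eta>. Such normals are
  dense in the sphere: the point of K farthest from a distant point is touched by the
  ball around that point. Near a touched point the section of K at depth s below p has
  (n-1)-volume between c1 s^((n-1)/2) and c2 s^((n-1)/2): the ball gives the upper
  bound, and since the smooth boundary is tangent to the ball at p, K contains a
  paraboloid region below p and hence a disc of radius of order sqrt s in that section.
  If q(\<xi>, p \<bullet> \<xi>) were nonzero, the section function would near that level be a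
  continuous nonvanishing factor times a polynomial in s, whose square has exact order
  s^(2m) at 0; as n-1 is odd this is impossible. So q(\<xi>, .) vanishes at the support values for a dense set of
  directions, by continuity for all of them, and a quadratic vanishing at the two
  distinct values h^+_K(\<xi>) and h^-_K(\<xi>) has the stated form.
\<close>

section \<open>Support functions\<close>

lemma supp_minus_eq_neg_supp_plus: "supp_minus K \<xi> = - supp_plus K (- \<xi>)"
  unfolding supp_minus_def supp_plus_def Inf_real_def image_image by simp

lemma inner_le_supp_plus:
  fixes K :: "'a::euclidean_space set"
  assumes "compact K" "x \<in> K"
  shows "x \<bullet> \<xi> \<le> supp_plus K \<xi>"
proof -
  have "bounded ((\<lambda>x. x \<bullet> \<xi>) ` K)"
    using assms(1) by (intro compact_imp_bounded compact_continuous_image continuous_intros)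
  then show ?thesis
    unfolding supp_plus_def using assms(2) by (intro cSUP_upper bounded_imp_bdd_above)
qed

lemma supp_minus_le_inner:
  fixes K :: "'a::euclidean_space set"
  assumes "compact K" "x \<in> K"
  shows "supp_minus K \<xi> \<le> x \<bullet> \<xi>"
  using inner_le_supp_plus[OF assms, of "- \<xi>"] by (simp add: supp_minus_eq_neg_supp_plus)

lemma supp_plus_eq_maximum:
  fixes K :: "'a::euclidean_space set"
  assumes "p \<in> K" "\<And>x. x \<in> K \<Longrightarrow> x \<bullet> \<xi> \<le> p \<bullet> \<xi>"
  shows "supp_plus K \<xi> = p \<bullet> \<xi>"
  unfolding supp_plus_def using assms by (intro cSup_eq_maximum) auto

lemma lipschitz_on_supp_plus:
  fixes K :: "'a::euclidean_space set"
  assumes K: "compact K" "K \<noteq> {}" and B: "\<And>x. x \<in> K \<Longrightarrow> norm x \<le> B" and "0 \<le> B"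
  shows "lipschitz_on B S (supp_plus K)"
proof -
  have le: "supp_plus K \<xi> \<le> supp_plus K \<zeta> + B * dist \<xi> \<zeta>" for \<xi> \<zeta>
    unfolding supp_plus_def[of K \<xi>]
  proof (rule cSUP_least[OF K(2)])
    fix x assume x: "x \<in> K"
    have "x \<bullet> (\<xi> - \<zeta>) \<le> B * dist \<xi> \<zeta>"
      using norm_cauchy_schwarz[of x "\<xi> - \<zeta>"] B[OF x]
      by (simp add: dist_norm) (meson mult_right_mono norm_ge_zero order_trans)
    then show "x \<bullet> \<xi> \<le> supp_plus K \<zeta> + B * dist \<xi> \<zeta>"
      using inner_le_supp_plus[OF K(1) x, of \<zeta>] by (simp add: inner_diff_right)
  qed
  show ?thesis
  proof (rule lipschitz_onI)
    fix \<xi> \<zeta>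
    show "dist (supp_plus K \<xi>) (supp_plus K \<zeta>) \<le> B * dist \<xi> \<zeta>"
      using le[of \<xi> \<zeta>] le[of \<zeta> \<xi>] by (simp add: dist_real_def dist_commute abs_le_iff)
  qed fact
qed

lemma continuous_on_supp_plus:
  fixes K :: "'a::euclidean_space set"
  assumes "compact K" "K \<noteq> {}"
  shows "continuous_on S (supp_plus K)"
proof -
  obtain B where "\<forall>x\<in>K. norm x \<le> B" "B > 0"
    using compact_imp_bounded[OF assms(1)] bounded_pos by blast
  then show ?thesis
    by (intro lipschitz_on_continuous_on lipschitz_on_supp_plus assms) auto
qed

lemma continuous_on_supp_minus:
  fixes K :: "'a::euclidean_space set"
  assumes "compact K" "K \<noteq> {}"
  shows "continuous_on S (supp_minus K)"
  unfolding supp_minus_eq_neg_supp_plus[abs_def]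
  by (intro continuous_on_minus continuous_on_compose2[OF continuous_on_supp_plus[OF assms]]
      continuous_intros) auto

lemma supp_minus_less_supp_plus:
  fixes K :: "'a::euclidean_space set"
  assumes K: "compact K" "interior K \<noteq> {}" and \<xi>: "\<xi> \<noteq> 0"
  shows "supp_minus K \<xi> < supp_plus K \<xi>"
proof -
  obtain x e where e: "e > 0" "ball x e \<subseteq> K" using K(2) by (auto simp: mem_interior)
  define d where "d = (e / 2 / norm \<xi>) *\<^sub>R \<xi>"
  have "x + d \<in> K" "x - d \<in> K" using e \<xi> by (auto intro!: subsetD[OF e(2)] simp: d_def dist_norm)
  moreover have "d \<bullet> \<xi> > 0" using e \<xi> by (simp add: d_def)
  ultimately show ?thesis
    using inner_le_supp_plus[OF K(1), of "x + d" \<xi>] supp_minus_le_inner[OF K(1), of "x - d" \<xi>]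
    by (simp add: inner_add_left inner_diff_left)
qed

section \<open>Polynomials\<close>

lemma continuous_on_poly_bounded_degree:
  fixes p :: "'a::topological_space \<Rightarrow> 'b::real_normed_field poly"
  assumes "\<And>k. continuous_on S (\<lambda>x. coeff (p x) k)" "\<And>x. x \<in> S \<Longrightarrow> degree (p x) \<le> d"
    and "continuous_on S f"
  shows "continuous_on S (\<lambda>x. poly (p x) (f x))"
proof -
  have "continuous_on S (\<lambda>x. \<Sum>i\<le>d. coeff (p x) i * f x ^ i)"
    by (intro continuous_intros assms)
  moreover have "poly (p x) y = (\<Sum>i\<le>d. coeff (p x) i * y ^ i)" if "x \<in> S" for x y
  proof -
    have "poly (p x) y = poly (\<Sum>i\<le>d. monom (coeff (p x) i) i) y"
      by (simp only: poly_as_sum_of_monoms'[OF assms(2)[OF that]])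
    then show ?thesis by (simp add: poly_sum poly_monom)
  qed
  ultimately show ?thesis by (simp cong: continuous_on_cong)
qed

lemma poly_degree_2_eq_roots:
  fixes q :: "'a::idom poly"
  assumes "degree q = 2" "poly q a = 0" "poly q b = 0" "a \<noteq> b"
  shows "poly q t = - coeff q 2 * (a - t) * (t - b)"
proof -
  have pq: "poly q x = coeff q 0 + coeff q 1 * x + coeff q 2 * x^2" for x
    by (simp add: poly_altdef assms(1) numeral_2_eq_2 atMost_Suc)
  have "(a - b) * (coeff q 1 + coeff q 2 * (a + b)) = poly q a - poly q b"
    by (simp add: pq power2_eq_square algebra_simps)
  then have "coeff q 1 + coeff q 2 * (a + b) = 0"
    using assms(2-4) by simp
  then have c1: "coeff q 1 = - coeff q 2 * (a + b)" by (simp add: eq_neg_iff_add_eq_0)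
  have "coeff q 0 - coeff q 2 * a * b = poly q a"
    unfolding pq c1 by (simp add: power2_eq_square algebra_simps)
  then have c0: "coeff q 0 = coeff q 2 * a * b" using assms(2) by simp
  show ?thesis unfolding pq c0 c1 by (simp add: power2_eq_square algebra_simps)
qed

lemma poly_eq_power_order_mult:
  fixes p :: "'a::idom poly"
  assumes "p \<noteq> 0"
  obtains r where "poly r 0 \<noteq> 0" "\<And>s. poly p s = s ^ order 0 p * poly r s"
proof -
  obtain r where r: "p = [:0, 1:] ^ order 0 p * r" "\<not> [:0, 1:] dvd r"
    using order_decomp[OF assms, of 0] by auto
  have "poly p s = s ^ order 0 p * poly r s" for s by (subst r(1)) simp
  moreover have "poly r 0 \<noteq> 0" using r(2) by (simp add: poly_eq_0_iff_dvd)
  ultimately show ?thesis using that by blast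
qed

lemma power_eq_of_bounds:
  fixes v :: "real \<Rightarrow> real"
  assumes "c1 > 0" "(v \<longlongrightarrow> l) (at_right 0)" "l > 0"
    and bounds: "eventually (\<lambda>s. c1 * s ^ N \<le> s ^ k * v s \<and> s ^ k * v s \<le> c2 * s ^ N) (at_right 0)"
  shows "N = k"
proof (rule linorder_cases[of N k])
  have pos: "eventually (\<lambda>s::real. s > 0) (at_right 0)" by (simp add: eventually_at_right_less)
  {
    assume "N < k"
    have "eventually (\<lambda>s. c1 \<le> s ^ (k - N) * v s) (at_right 0)"
      using bounds pos
    proof eventually_elim
      case (elim s)
      have "s ^ k = s ^ N * s ^ (k - N)" using \<open>N < k\<close> by (simp flip: power_add)
      then have "s ^ N * c1 \<le> s ^ N * (s ^ (k - N) * v s)" using elim(1) by (simp add: mult_ac)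
      then show ?case using elim(2) by simp
    qed
    moreover have "((\<lambda>s. s ^ (k - N) * v s) \<longlongrightarrow> 0 ^ (k - N) * l) (at_right 0)"
      by (intro tendsto_intros assms(2))
    ultimately have "c1 \<le> 0"
      using \<open>N < k\<close> by (intro tendsto_le[OF _ _ tendsto_const]) (auto simp: power_0_left)
    then show "N = k" using assms(1) by simp
  next
    assume "k < N"
    have "eventually (\<lambda>s. v s \<le> c2 * s ^ (N - k)) (at_right 0)"
      using bounds pos
    proof eventually_elim
      case (elim s)
      have "s ^ N = s ^ k * s ^ (N - k)" using \<open>k < N\<close> by (simp flip: power_add)
      then have "s ^ k * v s \<le> s ^ k * (c2 * s ^ (N - k))" using elim(1) by (simp add: mult_ac)
      then show ?case using elim(2) by simp
    qed
    moreover have "((\<lambda>s. c2 * s ^ (N - k)) \<longlongrightarrow> c2 * 0 ^ (N - k)) (at_right 0)"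
      by (intro tendsto_intros)
    ultimately have "l \<le> 0"
      using \<open>k < N\<close> by (intro tendsto_le[OF _ _ assms(2)]) (auto simp: power_0_left)
    then show "N = k" using assms(3) by simp
  }
qed

lemma order_eq_of_power_bounds:
  fixes p :: "real poly" and u :: "real \<Rightarrow> real"
  assumes "c1 > 0" "(u \<longlongrightarrow> u0) (at_right 0)" "u0 \<noteq> 0"
    and bounds: "eventually (\<lambda>s. c1 * s ^ N \<le> (u s * poly p s)\<^sup>2 \<and> (u s * poly p s)\<^sup>2 \<le> c2 * s ^ N)
                   (at_right 0)"
  shows "N = 2 * order 0 p"
proof -
  have "p \<noteq> 0"
  proof
    assume "p = 0"
    have "eventually (\<lambda>s::real. False) (at_right 0)"
      using bounds eventually_at_right_less[of 0]
    proof eventually_elim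
      case (elim s)
      then have "c1 * s ^ N \<le> 0" using \<open>p = 0\<close> by simp
      moreover have "c1 * s ^ N > 0" using elim(2) assms(1) by simp
      ultimately show False by simp
    qed
    then show False by simp
  qed
  then obtain r where r: "poly r 0 \<noteq> 0" "\<And>s. poly p s = s ^ order 0 p * poly r s"
    using poly_eq_power_order_mult by blast
  have "(u s * poly p s)\<^sup>2 = s ^ (2 * order 0 p) * (u s * poly r s)\<^sup>2" for s
    by (simp add: r(2) power_mult_distrib power_even_eq)
  moreover have lim: "((\<lambda>s. (u s * poly r s)\<^sup>2) \<longlongrightarrow> (u0 * poly r 0)\<^sup>2) (at_right 0)"
    by (intro tendsto_intros assms(2))
  ultimately show ?thesis
    using assms(3) r(1) bounds by (intro power_eq_of_bounds[OF assms(1) lim]) auto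
qed

section \<open>Section areas\<close>

definition drop_coord :: "'n \<Rightarrow> real^'n \<Rightarrow> ('n \<Rightarrow> real)" where
  "drop_coord a x = restrict (\<lambda>i. x $ i) (UNIV - {a})"

definition insert_coord :: "'n \<Rightarrow> real \<Rightarrow> ('n \<Rightarrow> real) \<Rightarrow> real^'n" where
  "insert_coord a t f = (\<chi> i. if i = a then t else f i)"

lemma insert_coord_drop_coord: "x $ a = t \<Longrightarrow> insert_coord a t (drop_coord a x) = x"
  by (simp add: vec_eq_iff insert_coord_def drop_coord_def)

lemma drop_coord_insert_coord:
  "f \<in> extensional (UNIV - {a}) \<Longrightarrow> drop_coord a (insert_coord a t f) = f"
  by (auto simp: extensional_def insert_coord_def drop_coord_def)

lemma drop_coord_in_space: "drop_coord a x \<in> space (PiM (UNIV - {a}) (\<lambda>_. lborel))"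
  by (simp add: space_PiM drop_coord_def)

lemma measurable_insert_coord:
  fixes a :: "'n::finite"
  shows "insert_coord a t \<in> borel_measurable (PiM (UNIV - {a}) (\<lambda>_. lborel))"
proof (subst borel_measurable_euclidean_space, intro ballI)
  fix b :: "real^'n" assume "b \<in> Basis"
  then obtain i where b: "b = axis i 1" by (auto simp: Basis_vec_def)
  show "(\<lambda>f. insert_coord a t f \<bullet> b) \<in> borel_measurable (PiM (UNIV - {a}) (\<lambda>_. lborel))"
  proof (cases "i = a")
    case False
    then have "i \<in> UNIV - {a}" by simp
    then have "(\<lambda>f. f i) \<in> borel_measurable (PiM (UNIV - {a}) (\<lambda>_. lborel :: real measure))"
      by measurable
    then show ?thesis using False by (simp add: b insert_coord_def cart_eq_inner_axis[symmetric])
  qed (simp add: b insert_coord_def cart_eq_inner_axis[symmetric])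
qed

lemma section_area_drop_coord:
  fixes \<xi> :: "real^'n"
  assumes "norm \<xi> = 1"
  obtains a :: 'n and Q :: "real^'n \<Rightarrow> real^'n" where "orthogonal_transformation Q" "Q \<xi> = axis a 1"
    "section_area K \<xi> t =
       measure (PiM (UNIV - {a}) (\<lambda>_. lborel)) (drop_coord a ` Q ` (K \<inter> {x. x \<bullet> \<xi> = t}))"
proof -
  define a :: 'n where "a = (SOME a. True)"
  define Q where "Q = (SOME Q. orthogonal_transformation Q \<and> Q \<xi> = axis a (1::real))"
  have "norm \<xi> = norm (axis a (1::real))" using assms by simp
  then obtain Q0 :: "real^'n \<Rightarrow> real^'n" where "orthogonal_transformation Q0" "Q0 \<xi> = axis a 1"
    by (rule orthogonal_transformation_exists)
  then have "orthogonal_transformation Q \<and> Q \<xi> = axis a 1"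
    unfolding Q_def by (rule someI[where x = Q0, OF conjI])
  then show ?thesis
    using that[of Q a] unfolding section_area_def drop_coord_def[abs_def] Let_def
    by (simp add: a_def Q_def)
qed

lemma section_area_nonneg: "0 \<le> section_area K \<xi> t"
  unfolding section_area_def Let_def by (rule measure_nonneg)

lemma PiM_lborel_cube:
  fixes z :: "'i \<Rightarrow> real"
  assumes "finite I" "0 \<le> r"
  shows "PiE I (\<lambda>i. {z i - r .. z i + r}) \<in> fmeasurable (PiM I (\<lambda>_. lborel))"
    and "measure (PiM I (\<lambda>_. lborel)) (PiE I (\<lambda>i. {z i - r .. z i + r})) = (2 * r) ^ card I"
proof -
  interpret product_sigma_finite "\<lambda>_. lborel" ..
  have "emeasure (PiM I (\<lambda>_. lborel)) (PiE I (\<lambda>i. {z i - r .. z i + r}))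
      = (\<Prod>i\<in>I. emeasure lborel {z i - r .. z i + r})"
    using assms(1) by (intro emeasure_PiM) auto
  also have "\<dots> = ennreal ((2 * r) ^ card I)"
    using assms(2) by (simp add: prod_ennreal ennreal_power)
  finally have *: "emeasure (PiM I (\<lambda>_. lborel)) (PiE I (\<lambda>i. {z i - r .. z i + r}))
      = ennreal ((2 * r) ^ card I)" .
  moreover have "PiE I (\<lambda>i. {z i - r .. z i + r}) \<in> sets (PiM I (\<lambda>_. lborel))"
    using assms(1) by (intro sets_PiM_I_finite) auto
  ultimately show "PiE I (\<lambda>i. {z i - r .. z i + r}) \<in> fmeasurable (PiM I (\<lambda>_. lborel))"
    by (simp add: fmeasurable_def)
  show "measure (PiM I (\<lambda>_. lborel)) (PiE I (\<lambda>i. {z i - r .. z i + r})) = (2 * r) ^ card I"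
    using * assms(2) by (simp add: measure_def)
qed

lemma sets_drop_coord_image:
  fixes S :: "(real^'n) set"
  assumes "closed S" "S \<subseteq> {x. x $ a = t}"
  shows "drop_coord a ` S \<in> sets (PiM (UNIV - {a}) (\<lambda>_. lborel))"
proof -
  have "drop_coord a ` S = insert_coord a t -` S \<inter> space (PiM (UNIV - {a}) (\<lambda>_. lborel))"
  proof (intro set_eqI iffI)
    fix f assume "f \<in> drop_coord a ` S"
    then show "f \<in> insert_coord a t -` S \<inter> space (PiM (UNIV - {a}) (\<lambda>_. lborel))"
      using assms(2) insert_coord_drop_coord drop_coord_in_space by fastforce
  next
    fix f assume f: "f \<in> insert_coord a t -` S \<inter> space (PiM (UNIV - {a}) (\<lambda>_. lborel))"
    then have "drop_coord a (insert_coord a t f) = f"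
      by (intro drop_coord_insert_coord) (simp add: space_PiM PiE_def)
    then show "f \<in> drop_coord a ` S" using f by (metis IntD1 image_eqI vimageE)
  qed
  then show ?thesis using assms(1) by (simp add: measurable_sets[OF measurable_insert_coord])
qed

lemma drop_coord_image_subset_cube:
  fixes S :: "(real^'n) set"
  assumes "S \<subseteq> cball c r"
  shows "drop_coord a ` S \<subseteq> PiE (UNIV - {a}) (\<lambda>i. {c $ i - r .. c $ i + r})"
proof
  fix f assume "f \<in> drop_coord a ` S"
  then obtain x where x: "x \<in> S" "f = drop_coord a x" by blast
  have bound: "\<bar>x $ i - c $ i\<bar> \<le> r" for i
    using assms x(1) component_le_norm_cart[of "x - c" i] by (auto simp: dist_norm norm_minus_commute)
  have "x $ i \<in> {c $ i - r .. c $ i + r}" for i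
    using bound[of i] by (simp only: abs_le_iff atLeastAtMost_iff) linarith
  then show "f \<in> PiE (UNIV - {a}) (\<lambda>i. {c $ i - r .. c $ i + r})"
    by (simp add: x(2) drop_coord_def)
qed

lemma cube_subset_drop_coord_image:
  fixes S :: "(real^'n) set"
  assumes "0 \<le> r" "c $ a = t" "\<And>x. x $ a = t \<Longrightarrow> norm (x - c) \<le> r \<Longrightarrow> x \<in> S"
  shows "PiE (UNIV - {a}) (\<lambda>i. {c $ i - r / CARD('n) .. c $ i + r / CARD('n)}) \<subseteq> drop_coord a ` S"
proof
  fix f assume f: "f \<in> PiE (UNIV - {a}) (\<lambda>i. {c $ i - r / CARD('n) .. c $ i + r / CARD('n)})"
  define x where "x = insert_coord a t f"
  have component: "\<bar>(x - c) $ i\<bar> \<le> r / CARD('n)" for i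
  proof (cases "i = a")
    case False
    then have "f i \<in> {c $ i - r / CARD('n) .. c $ i + r / CARD('n)}" using f by (auto simp: PiE_iff)
    then show ?thesis using False by (auto simp: x_def insert_coord_def abs_le_iff)
  qed (use assms in \<open>simp add: x_def insert_coord_def\<close>)
  have "norm (x - c) \<le> (\<Sum>i\<in>UNIV. \<bar>(x - c) $ i\<bar>)" by (rule norm_le_l1_cart)
  also have "\<dots> \<le> (\<Sum>i\<in>(UNIV::'n set). r / CARD('n))" by (rule sum_mono) (rule component)
  finally have "x \<in> S" using assms by (simp add: x_def insert_coord_def)
  moreover have "f = drop_coord a x"
    using f by (simp add: x_def drop_coord_insert_coord PiE_def)
  ultimately show "f \<in> drop_coord a ` S" by blast
qed

lemma measure_drop_coord_image_le:
  fixes S :: "(real^'n) set"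
  assumes "closed S" "S \<subseteq> {x. x $ a = t}" "S \<subseteq> cball c r" "0 \<le> r"
  shows "measure (PiM (UNIV - {a}) (\<lambda>_. lborel)) (drop_coord a ` S) \<le> (2 * r) ^ (CARD('n) - 1)"
proof -
  have "measure (PiM (UNIV - {a}) (\<lambda>_. lborel)) (drop_coord a ` S)
      \<le> measure (PiM (UNIV - {a}) (\<lambda>_. lborel)) (PiE (UNIV - {a}) (\<lambda>i. {c $ i - r .. c $ i + r}))"
    using assms by (intro measure_mono_fmeasurable sets_drop_coord_image drop_coord_image_subset_cube
        PiM_lborel_cube(1)) auto
  then show ?thesis using assms(4) by (simp add: PiM_lborel_cube(2) card_Diff_singleton)
qed

lemma measure_drop_coord_image_ge:
  fixes S :: "(real^'n) set"
  assumes "compact S" "S \<subseteq> {x. x $ a = t}" "0 \<le> r" "c $ a = t"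
    and "\<And>x. x $ a = t \<Longrightarrow> norm (x - c) \<le> r \<Longrightarrow> x \<in> S"
  shows "(2 * (r / CARD('n))) ^ (CARD('n) - 1) \<le> measure (PiM (UNIV - {a}) (\<lambda>_. lborel)) (drop_coord a ` S)"
proof -
  obtain z B where "S \<subseteq> cball z B" "0 \<le> B"
    using compact_imp_bounded[OF assms(1)] bounded_subset_cball by blast
  then have "drop_coord a ` S \<in> fmeasurable (PiM (UNIV - {a}) (\<lambda>_. lborel))"
    using assms(1,2)
    by (intro fmeasurableI2[OF PiM_lborel_cube(1)[where z = "\<lambda>i. z $ i" and r = B]]
        drop_coord_image_subset_cube sets_drop_coord_image compact_imp_closed) auto
  moreover have "PiE (UNIV - {a}) (\<lambda>i. {c $ i - r / CARD('n) .. c $ i + r / CARD('n)}) \<subseteq> drop_coord a ` S"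
    using assms(3-5) by (rule cube_subset_drop_coord_image)
  ultimately have "measure (PiM (UNIV - {a}) (\<lambda>_. lborel))
        (PiE (UNIV - {a}) (\<lambda>i. {c $ i - r / CARD('n) .. c $ i + r / CARD('n)}))
      \<le> measure (PiM (UNIV - {a}) (\<lambda>_. lborel)) (drop_coord a ` S)"
    using assms(3) by (intro measure_mono_fmeasurable PiM_lborel_cube(1) fmeasurableD) auto
  then show ?thesis using assms(3) by (simp add: PiM_lborel_cube(2) card_Diff_singleton)
qed

lemma orthogonal_transformation_component:
  assumes "orthogonal_transformation Q" "Q \<xi> = axis a 1"
  shows "Q x $ a = x \<bullet> \<xi>"
proof -
  have "Q x $ a = Q x \<bullet> Q \<xi>" using assms(2) by (simp add: cart_eq_inner_axis)
  then show ?thesis using assms(1) by (simp add: orthogonal_transformation_def)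
qed

lemma compact_linear_image_section:
  fixes K :: "'a::euclidean_space set" and Q :: "'a \<Rightarrow> 'b::euclidean_space"
  assumes "compact K" "linear Q"
  shows "compact (Q ` (K \<inter> {x. x \<bullet> \<xi> = t}))"
  using assms
  by (intro compact_continuous_image linear_continuous_on compact_Int_closed)
    (auto simp: linear_conv_bounded_linear inner_commute closed_hyperplane[of \<xi>, simplified inner_commute])

lemma section_area_le:
  fixes K :: "(real^'n) set"
  assumes "compact K" "norm \<xi> = 1" "0 \<le> r" "\<And>x. x \<in> K \<Longrightarrow> x \<bullet> \<xi> = c \<bullet> \<xi> \<Longrightarrow> norm (x - c) \<le> r"
  shows "section_area K \<xi> (c \<bullet> \<xi>) \<le> (2 * r) ^ (CARD('n) - 1)"
proof -
  obtain a :: 'n and Q :: "real^'n \<Rightarrow> real^'n" where Q: "orthogonal_transformation Q" "Q \<xi> = axis a 1" and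
    area: "section_area K \<xi> (c \<bullet> \<xi>) = measure (PiM (UNIV - {a}) (\<lambda>_. lborel))
             (drop_coord a ` Q ` (K \<inter> {x. x \<bullet> \<xi> = c \<bullet> \<xi>}))"
    using section_area_drop_coord[OF assms(2)] by blast
  have "linear Q" using Q(1) by (simp add: orthogonal_transformation_linear)
  have "compact (Q ` (K \<inter> {x. x \<bullet> \<xi> = c \<bullet> \<xi>}))"
    using assms(1) \<open>linear Q\<close> by (rule compact_linear_image_section)
  moreover have "norm (Q x - Q c) \<le> r" if "x \<in> K" "x \<bullet> \<xi> = c \<bullet> \<xi>" for x
    using assms(4)[OF that] orthogonal_transformation_norm[OF Q(1), of "x - c"]
    by (simp add: linear_diff[OF \<open>linear Q\<close>])
  ultimately show ?thesis
    unfolding area using assms(3)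
    by (intro measure_drop_coord_image_le[where t = "c \<bullet> \<xi>" and c = "Q c"] compact_imp_closed)
      (auto simp: orthogonal_transformation_component[OF Q] dist_norm norm_minus_commute)
qed

lemma section_area_ge:
  fixes K :: "(real^'n) set"
  assumes "compact K" "norm \<xi> = 1" "0 \<le> r" "\<And>y. y \<bullet> \<xi> = 0 \<Longrightarrow> norm y \<le> r \<Longrightarrow> c + y \<in> K"
  shows "(2 * (r / CARD('n))) ^ (CARD('n) - 1) \<le> section_area K \<xi> (c \<bullet> \<xi>)"
proof -
  obtain a :: 'n and Q :: "real^'n \<Rightarrow> real^'n" where Q: "orthogonal_transformation Q" "Q \<xi> = axis a 1" and
    area: "section_area K \<xi> (c \<bullet> \<xi>) = measure (PiM (UNIV - {a}) (\<lambda>_. lborel))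
             (drop_coord a ` Q ` (K \<inter> {x. x \<bullet> \<xi> = c \<bullet> \<xi>}))"
    using section_area_drop_coord[OF assms(2)] by blast
  have "linear Q" using Q(1) by (simp add: orthogonal_transformation_linear)
  note Qa = orthogonal_transformation_component[OF Q]
  have "compact (Q ` (K \<inter> {x. x \<bullet> \<xi> = c \<bullet> \<xi>}))"
    using assms(1) \<open>linear Q\<close> by (rule compact_linear_image_section)
  moreover have "x \<in> Q ` (K \<inter> {x. x \<bullet> \<xi> = c \<bullet> \<xi>})"
    if x: "x $ a = c \<bullet> \<xi>" "norm (x - Q c) \<le> r" for x
  proof -
    obtain z where z: "x = Q z" using orthogonal_transformation_surj[OF Q(1)] by (metis surjD)
    have Qzc: "Q (z - c) = x - Q c" using z linear_diff[OF \<open>linear Q\<close>] by simp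
    have "(z - c) \<bullet> \<xi> = 0" using Qa[of "z - c"] Qa[of c] x(1) by (simp add: Qzc)
    moreover have "norm (z - c) \<le> r" using x(2) Qzc Q(1) by (metis orthogonal_transformation_norm)
    ultimately have "c + (z - c) \<in> K" by (rule assms(4))
    moreover have "z \<bullet> \<xi> = c \<bullet> \<xi>" using Qa[of z] x(1) z by simp
    ultimately show ?thesis using z by simp
  qed
  ultimately show ?thesis
    unfolding area using assms(3)
    by (intro measure_drop_coord_image_ge[where t = "c \<bullet> \<xi>" and c = "Q c"]) (auto simp: Qa)
qed

section \<open>Quadratic upper bounds for C2 functions\<close>

lemma onorm_inner_le_norm: "onorm (\<lambda>h. a \<bullet> h) \<le> norm (a::'a::real_inner)"
  using onorm_inner_right[OF bounded_linear_ident, of a] onorm_id_le[where 'a = 'a]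
  by (meson mult_left_le norm_ge_zero order_trans)

lemma gradient_unique:
  fixes f :: "'a::euclidean_space \<Rightarrow> real"
  assumes "(f has_derivative (\<lambda>h. a \<bullet> h)) (at x)" "(f has_derivative (\<lambda>h. b \<bullet> h)) (at x)"
  shows "a = b"
proof -
  have "(\<lambda>h. a \<bullet> h) = (\<lambda>h. b \<bullet> h)" by (rule has_derivative_unique[OF assms])
  then have "(a - b) \<bullet> (a - b) = 0" by (metis inner_diff_left inner_diff_right diff_self)
  then show ?thesis by simp
qed

lemma Ck_on_1_lipschitz_bound:
  fixes \<phi> :: "'a::euclidean_space \<Rightarrow> real"
  assumes "Ck_on 1 \<phi> U" "compact C" "convex C" "C \<subseteq> U"
  shows "\<exists>B. \<forall>x\<in>C. \<forall>y\<in>C. \<bar>\<phi> x - \<phi> y\<bar> \<le> B * norm (x - y)"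
proof -
  obtain g where g: "\<forall>x\<in>U. (\<phi> has_derivative (\<lambda>h. g x \<bullet> h)) (at x)"
    and g_cont: "\<forall>i\<in>Basis. continuous_on U (\<lambda>x. g x \<bullet> i)"
    using assms(1) by (auto simp: One_nat_def)
  have "continuous_on C g"
    using g_cont continuous_on_componentwise continuous_on_subset[OF _ assms(4)] by blast
  then have "bounded (g ` C)" using assms(2) by (intro compact_imp_bounded compact_continuous_image)
  then obtain B where B: "\<forall>x\<in>C. norm (g x) \<le> B" by (auto simp: bounded_iff)
  have "\<bar>\<phi> x - \<phi> y\<bar> \<le> B * norm (x - y)" if "x \<in> C" "y \<in> C" for x y
  proof -
    have "norm (\<phi> x - \<phi> y) \<le> B * norm (x - y)"
    proof (rule differentiable_bound[OF assms(3) _ _ that])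
      show "(\<phi> has_derivative (\<lambda>h. g z \<bullet> h)) (at z within C)" if "z \<in> C" for z
        using g that assms(4) by (blast intro: has_derivative_at_withinI)
      show "onorm (\<lambda>h. g z \<bullet> h) \<le> B" if "z \<in> C" for z
        using onorm_inner_le_norm[of "g z"] B that by force
    qed
    then show ?thesis by simp
  qed
  then show ?thesis by blast
qed

lemma Ck_on_2_gradient_lipschitz:
  fixes f :: "'a::euclidean_space \<Rightarrow> real"
  assumes "open U" "p \<in> U" "Ck_on 2 f U" "\<forall>y\<in>U. (f has_derivative (\<lambda>h. g y \<bullet> h)) (at y)"
  shows "\<exists>\<delta>>0. \<exists>L\<ge>0. cball p \<delta> \<subseteq> U \<and> (\<forall>x\<in>cball p \<delta>. norm (g x - g p) \<le> L * norm (x - p))"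
proof -
  obtain g1 where g1: "\<forall>x\<in>U. (f has_derivative (\<lambda>h. g1 x \<bullet> h)) (at x)"
    and g1_C1: "\<forall>i\<in>Basis. Ck_on 1 (\<lambda>x. g1 x \<bullet> i) U"
    using assms(3) by (auto simp: numeral_2_eq_2)
  have g_eq: "g x = g1 x" if "x \<in> U" for x
    using gradient_unique assms(4) g1 that by blast
  obtain \<delta> where \<delta>: "\<delta> > 0" "cball p \<delta> \<subseteq> U"
    using assms(1,2) by (meson open_contains_cball)
  have "\<exists>B. \<forall>x\<in>cball p \<delta>. \<bar>g x \<bullet> i - g p \<bullet> i\<bar> \<le> B * norm (x - p)" if i: "i \<in> Basis" for i
  proof -
    obtain B where B: "\<forall>x\<in>cball p \<delta>. \<forall>y\<in>cball p \<delta>. \<bar>g1 x \<bullet> i - g1 y \<bullet> i\<bar> \<le> B * norm (x - y)"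
      using Ck_on_1_lipschitz_bound[OF g1_C1[rule_format, OF i] compact_cball convex_cball \<delta>(2)]
      by blast
    have "p \<in> cball p \<delta>" using \<delta>(1) by simp
    then show ?thesis using B g_eq \<delta>(2) by (metis subsetD)
  qed
  then obtain B where B: "\<forall>i\<in>Basis. \<forall>x\<in>cball p \<delta>. \<bar>g x \<bullet> i - g p \<bullet> i\<bar> \<le> B i * norm (x - p)"
    by metis
  have "norm (g x - g p) \<le> (\<Sum>i\<in>Basis. \<bar>B i\<bar>) * norm (x - p)" if "x \<in> cball p \<delta>" for x
  proof -
    have "norm (g x - g p) \<le> (\<Sum>i\<in>Basis. \<bar>(g x - g p) \<bullet> i\<bar>)" by (rule norm_le_l1)
    also have "\<dots> \<le> (\<Sum>i\<in>Basis. \<bar>B i\<bar> * norm (x - p))"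
    proof (rule sum_mono)
      fix i :: 'a assume "i \<in> Basis"
      then have "\<bar>g x \<bullet> i - g p \<bullet> i\<bar> \<le> B i * norm (x - p)" using B that by blast
      also have "\<dots> \<le> \<bar>B i\<bar> * norm (x - p)" by (simp add: mult_right_mono)
      finally show "\<bar>(g x - g p) \<bullet> i\<bar> \<le> \<bar>B i\<bar> * norm (x - p)" by (simp add: inner_diff_left)
    qed
    finally show ?thesis by (simp add: sum_distrib_right)
  qed
  moreover have "(\<Sum>i\<in>Basis. \<bar>B i\<bar>) \<ge> 0" by (simp add: sum_nonneg)
  ultimately show ?thesis using \<delta> by blast
qed

lemma quadratic_bound_of_lipschitz_gradient:
  fixes f :: "'a::real_inner \<Rightarrow> real"
  assumes "\<forall>y\<in>cball p \<delta>. (f has_derivative (\<lambda>h. g y \<bullet> h)) (at y)"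
    and "\<forall>y\<in>cball p \<delta>. norm (g y - g p) \<le> L * norm (y - p)" "0 \<le> L" "x \<in> cball p \<delta>"
  shows "f x \<le> f p + g p \<bullet> (x - p) + L * (norm (x - p))\<^sup>2"
proof -
  define r where "r = norm (x - p)"
  have sub: "cball p r \<subseteq> cball p \<delta>" using assms(4) by (auto simp: r_def dist_norm norm_minus_commute)
  have "norm (f x - f p - g p \<bullet> (x - p)) \<le> norm (x - p) * (L * r)"
  proof (rule differentiable_bound_linearization[where S = "cball p r" and f' = "\<lambda>y h. g y \<bullet> h"])
    show "p + t *\<^sub>R (x - p) \<in> cball p r" if "t \<in> {0..1}" for t
      using that by (auto simp: r_def dist_norm mult_left_le_one_le)
    show "(f has_derivative (\<lambda>h. g y \<bullet> h)) (at y within cball p r)" if "y \<in> cball p r" for y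
      using assms(1) sub that by (blast intro: has_derivative_at_withinI)
    show "onorm ((\<lambda>h. g y \<bullet> h) - (\<lambda>h. g p \<bullet> h)) \<le> L * r" if "y \<in> cball p r" for y
    proof -
      have "(\<lambda>h. g y \<bullet> h) - (\<lambda>h. g p \<bullet> h) = (\<lambda>h. (g y - g p) \<bullet> h)"
        by (simp add: fun_eq_iff inner_diff_left)
      then have "onorm ((\<lambda>h. g y \<bullet> h) - (\<lambda>h. g p \<bullet> h)) \<le> norm (g y - g p)"
        by (simp only: onorm_inner_le_norm)
      also have "\<dots> \<le> L * norm (y - p)" using assms(2) sub that by blast
      also have "\<dots> \<le> L * r"
        using that assms(3) by (intro mult_left_mono) (auto simp: dist_norm norm_minus_commute)
      finally show ?thesis .
    qed
  qed (simp add: r_def)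
  then show ?thesis by (simp add: r_def power2_eq_square algebra_simps)
qed

section \<open>Touching balls\<close>

definition touching_cball :: "'a::euclidean_space set \<Rightarrow> 'a \<Rightarrow> 'a \<Rightarrow> real \<Rightarrow> bool" where
  "touching_cball K p \<eta> R \<longleftrightarrow> norm \<eta> = 1 \<and> p \<in> K \<and> 0 < R \<and> K \<subseteq> cball (p - R *\<^sub>R \<eta>) R"

lemma norm_add_scaleR_unit_square:
  fixes y \<eta> :: "'a::real_inner"
  assumes "norm \<eta> = 1"
  shows "(norm (y + s *\<^sub>R \<eta>))\<^sup>2 = (norm y)\<^sup>2 + 2 * s * (y \<bullet> \<eta>) + s\<^sup>2"
proof -
  have "\<eta> \<bullet> \<eta> = 1" using assms by (simp add: dot_square_norm)
  then show ?thesis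
    unfolding power2_norm_eq_inner
    by (simp add: inner_add_left inner_add_right inner_commute power2_eq_square)
qed

lemma mem_cball_touching_iff:
  fixes \<eta> :: "'a::real_inner"
  assumes "norm \<eta> = 1" "0 \<le> R"
  shows "x \<in> cball (p - R *\<^sub>R \<eta>) R \<longleftrightarrow> (norm (x - p))\<^sup>2 + 2 * R * ((x - p) \<bullet> \<eta>) \<le> 0"
proof -
  have "x \<in> cball (p - R *\<^sub>R \<eta>) R \<longleftrightarrow> (norm ((x - p) + R *\<^sub>R \<eta>))\<^sup>2 \<le> R\<^sup>2"
    using assms(2) by (simp add: dist_norm norm_minus_commute algebra_simps power_mono_iff)
  then show ?thesis by (simp add: norm_add_scaleR_unit_square[OF assms(1)])
qed

lemma touching_cball_inner_le:
  assumes "touching_cball K p \<eta> R" "x \<in> K"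
  shows "(x - p) \<bullet> \<eta> \<le> 0"
proof -
  have "(norm (x - p))\<^sup>2 + 2 * R * ((x - p) \<bullet> \<eta>) \<le> 0"
    using assms mem_cball_touching_iff[of \<eta> R x p] by (auto simp: touching_cball_def)
  then have "R * ((x - p) \<bullet> \<eta>) \<le> 0" using zero_le_power2[of "norm (x - p)"] by linarith
  moreover have "R > 0" using assms(1) by (simp add: touching_cball_def)
  ultimately show ?thesis by (simp add: mult_le_0_iff)
qed

lemma touching_cball_section_radius:
  assumes "touching_cball K p \<eta> R" "x \<in> K" "(x - p) \<bullet> \<eta> = - s"
  shows "norm (x - (p - s *\<^sub>R \<eta>)) \<le> sqrt (2 * R * s)"
proof -
  have \<eta>: "norm \<eta> = 1" using assms(1) by (simp add: touching_cball_def)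
  have "(norm (x - p))\<^sup>2 \<le> 2 * R * s"
    using assms mem_cball_touching_iff[OF \<eta>, of R x p] by (auto simp: touching_cball_def)
  moreover have "(norm (x - (p - s *\<^sub>R \<eta>)))\<^sup>2 = (norm (x - p))\<^sup>2 - s\<^sup>2"
  proof -
    have "x - (p - s *\<^sub>R \<eta>) = (x - p) + s *\<^sub>R \<eta>" by simp
    then show ?thesis
      using assms(3) by (simp only: norm_add_scaleR_unit_square[OF \<eta>]) (simp add: power2_eq_square)
  qed
  ultimately have "(norm (x - (p - s *\<^sub>R \<eta>)))\<^sup>2 \<le> 2 * R * s"
    by (smt (verit) zero_le_power2)
  then show ?thesis by (rule real_le_rsqrt)
qed

lemma supp_plus_touching_cball:
  assumes "touching_cball K p \<eta> R"
  shows "supp_plus K \<eta> = p \<bullet> \<eta>"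
  using assms touching_cball_inner_le[OF assms]
  by (intro supp_plus_eq_maximum) (auto simp: touching_cball_def inner_diff_left)

lemma supp_minus_touching_cball:
  assumes "touching_cball K p (- \<xi>) R"
  shows "supp_minus K \<xi> = p \<bullet> \<xi>"
  using supp_plus_touching_cball[OF assms] by (simp add: supp_minus_eq_neg_supp_plus)

lemma touching_cball_frontier:
  assumes "touching_cball K p \<eta> R"
  shows "p \<in> frontier K"
proof -
  have "p \<notin> interior K"
  proof
    assume "p \<in> interior K"
    then obtain e where e: "e > 0" "ball p e \<subseteq> K" by (auto simp: mem_interior)
    have "norm \<eta> = 1" using assms by (simp add: touching_cball_def)
    then have "p + (e / 2) *\<^sub>R \<eta> \<in> K" using e by (intro subsetD[OF e(2)]) (simp add: dist_norm)
    from touching_cball_inner_le[OF assms this] have "(e / 2) * (\<eta> \<bullet> \<eta>) \<le> 0" by simp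
    then show False using e(1) \<open>norm \<eta> = 1\<close> by (simp add: dot_square_norm)
  qed
  then show ?thesis using assms closure_subset by (auto simp: frontier_def touching_cball_def)
qed

lemma continuous_on_vanishes_if_dense_zeros:
  fixes \<phi> :: "'a::metric_space \<Rightarrow> 'b::real_normed_vector"
  assumes "continuous_on S \<phi>" "x \<in> S"
    and "\<And>x \<epsilon>. x \<in> S \<Longrightarrow> \<epsilon> > 0 \<Longrightarrow> \<exists>y\<in>S. dist y x < \<epsilon> \<and> \<phi> y = 0"
  shows "\<phi> x = 0"
proof (rule ccontr)
  assume "\<phi> x \<noteq> 0"
  then obtain d where d: "d > 0" "\<forall>y\<in>S. dist y x < d \<longrightarrow> dist (\<phi> y) (\<phi> x) < norm (\<phi> x)"
    using assms(1,2) unfolding continuous_on_iff by (meson zero_less_norm_iff)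
  obtain y where "y \<in> S" "dist y x < d" "\<phi> y = 0" using assms(2,3) d(1) by blast
  then have "dist 0 (\<phi> x) < norm (\<phi> x)" using d(2) by auto
  then show False by simp
qed

lemma touching_cball_dense:
  fixes K :: "'a::euclidean_space set"
  assumes K: "compact K" "K \<noteq> {}" and \<xi>0: "norm \<xi>0 = 1" and \<epsilon>: "\<epsilon> > 0"
  shows "\<exists>\<xi> p R. dist \<xi> \<xi>0 < \<epsilon> \<and> touching_cball K p \<xi> R"
proof -
  obtain M where M: "\<forall>x\<in>K. norm x \<le> M" "M > 0"
    using compact_imp_bounded[OF K(1)] bounded_pos by blast
  define L where "L = 2 * M + 2 * M / \<epsilon>"
  define x0 where "x0 = - (L *\<^sub>R \<xi>0)"
  have "continuous_on K (\<lambda>x. norm (x - x0))" by (intro continuous_intros)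
  then obtain p where p: "p \<in> K" "\<forall>x\<in>K. norm (x - x0) \<le> norm (p - x0)"
    using compact_attains_sup[OF compact_continuous_image[OF _ K(1)]] K(2) by auto
  define R where "R = norm (p - x0)"
  have "norm p \<le> M" using M p by blast
  moreover have "norm (L *\<^sub>R \<xi>0) = L" using \<xi>0 M(2) \<epsilon> by (simp add: L_def)
  ultimately have R: "L - M \<le> R" "R \<le> L + M"
    using norm_triangle_ineq4[of "p + L *\<^sub>R \<xi>0" p] norm_triangle_ineq[of p "L *\<^sub>R \<xi>0"]
    by (auto simp: R_def x0_def)
  have LM: "2 * M / \<epsilon> < L - M" using \<epsilon> M(2) by (simp add: L_def)
  moreover have "0 < 2 * M / \<epsilon>" using \<epsilon> M(2) by simp
  ultimately have LM0: "0 < L - M" by linarith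
  then have R0: "R > 0" using R by linarith
  define \<xi> where "\<xi> = (1 / R) *\<^sub>R (p - x0)"
  have "touching_cball K p \<xi> R"
    using R0 p by (auto simp: touching_cball_def \<xi>_def R_def dist_norm norm_minus_commute)
  moreover have "dist \<xi> \<xi>0 < \<epsilon>"
  proof -
    have "\<xi> - \<xi>0 = (1 / R) *\<^sub>R (p + (L - R) *\<^sub>R \<xi>0)"
      using R0 by (simp add: \<xi>_def x0_def algebra_simps)
    then have "dist \<xi> \<xi>0 = norm (p + (L - R) *\<^sub>R \<xi>0) / R" using R0 by (simp add: dist_norm)
    also have "\<dots> \<le> 2 * M / R"
      using norm_triangle_ineq[of p "(L - R) *\<^sub>R \<xi>0"] \<xi>0 R \<open>norm p \<le> M\<close> R0
      by (intro divide_right_mono) auto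
    also have "\<dots> \<le> 2 * M / (L - M)" using R(1) R0 LM0 M(2) by (intro divide_left_mono) auto
    also have "\<dots> < \<epsilon>" using LM LM0 \<epsilon> by (simp add: field_simps)
    finally show ?thesis .
  qed
  ultimately show ?thesis by blast
qed

lemma vanishes_on_sphere_if_vanishes_at_touching:
  fixes K :: "'a::euclidean_space set"
  assumes "compact K" "K \<noteq> {}" "continuous_on (sphere 0 1) \<phi>"
    and "\<And>\<xi> p R. touching_cball K p \<xi> R \<Longrightarrow> \<phi> \<xi> = (0::real)"
    and "\<xi> \<in> sphere 0 1"
  shows "\<phi> \<xi> = 0"
proof (rule continuous_on_vanishes_if_dense_zeros[OF assms(3,5)])
  fix \<xi>0 :: 'a and \<epsilon> :: real assume "\<xi>0 \<in> sphere 0 1" "\<epsilon> > 0"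
  then obtain \<zeta> p R where "dist \<zeta> \<xi>0 < \<epsilon>" "touching_cball K p \<zeta> R"
    using touching_cball_dense[OF assms(1,2)] by fastforce
  then show "\<exists>\<zeta>\<in>sphere 0 1. dist \<zeta> \<xi>0 < \<epsilon> \<and> \<phi> \<zeta> = 0"
    using assms(4) by (auto simp: touching_cball_def)
qed

section \<open>Smooth boundary at a touching point\<close>

lemma open_halfspace_subset_imp_pos_multiple:
  fixes G \<eta> :: "'a::real_inner"
  assumes sub: "\<And>v. G \<bullet> v < 0 \<Longrightarrow> v \<bullet> \<eta> \<le> 0" and "G \<noteq> 0" "norm \<eta> = 1"
  shows "\<exists>\<mu>>0. G = \<mu> *\<^sub>R \<eta>"
proof -
  have \<eta>\<eta>: "\<eta> \<bullet> \<eta> = 1" using assms(3) by (simp add: dot_square_norm)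
  define w where "w = G - (G \<bullet> \<eta>) *\<^sub>R \<eta>"
  have w\<eta>: "w \<bullet> \<eta> = 0" using \<eta>\<eta> by (simp add: w_def inner_diff_left)
  have "w = 0"
  proof (rule ccontr)
    assume "w \<noteq> 0"
    then have ww: "w \<bullet> w > 0" by simp
    define v where "v = \<eta> - ((\<bar>G \<bullet> \<eta>\<bar> + 1) / (w \<bullet> w)) *\<^sub>R w"
    have "G \<bullet> w = w \<bullet> w"
      using w\<eta> by (simp add: w_def inner_diff_left inner_diff_right inner_commute)
    then have "G \<bullet> v = G \<bullet> \<eta> - (\<bar>G \<bullet> \<eta>\<bar> + 1)" using ww by (simp add: v_def inner_diff_right)
    then have "G \<bullet> v < 0" by linarith
    moreover have "v \<bullet> \<eta> = 1" using \<eta>\<eta> w\<eta> by (simp add: v_def inner_diff_left)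
    ultimately show False using sub by fastforce
  qed
  then have G: "G = (G \<bullet> \<eta>) *\<^sub>R \<eta>" by (simp add: w_def)
  have "G \<bullet> \<eta> \<noteq> 0" using G assms(2) by (metis scale_zero_left)
  moreover have "\<not> G \<bullet> \<eta> < 0" using sub[of \<eta>] \<eta>\<eta> by auto
  ultimately show ?thesis using G by (intro exI[of _ "G \<bullet> \<eta>"]) auto
qed

lemma smooth_boundary_local_quadratic:
  fixes K :: "'a::euclidean_space set"
  assumes "smooth_boundary K" "p \<in> K" "p \<in> frontier K"
  obtains G \<delta> L where "G \<noteq> 0" "\<delta> > 0" "L > 0"
    "\<And>x. norm (x - p) \<le> \<delta> \<Longrightarrow> G \<bullet> (x - p) + L * (norm (x - p))\<^sup>2 \<le> 0 \<Longrightarrow> x \<in> K"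
proof -
  obtain U f g where U: "open U" "p \<in> U" and smooth: "smooth_fun_on f U"
    and der_nz: "\<forall>y\<in>U. (f has_derivative (\<lambda>h. g y \<bullet> h)) (at y) \<and> g y \<noteq> 0"
    and KU: "K \<inter> U = {y\<in>U. f y \<le> 0}"
    using bspec[OF assms(1)[unfolded smooth_boundary_def] assms(3)] by blast
  have der: "\<forall>y\<in>U. (f has_derivative (\<lambda>h. g y \<bullet> h)) (at y)" using der_nz by blast
  have "Ck_on 2 f U" using smooth by (simp add: smooth_fun_on_def)
  then obtain \<delta> L where \<delta>: "\<delta> > 0" "cball p \<delta> \<subseteq> U" and "L \<ge> 0"
    and lip: "\<forall>x\<in>cball p \<delta>. norm (g x - g p) \<le> L * norm (x - p)"
    using Ck_on_2_gradient_lipschitz[OF U _ der] by blast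
  have "f p \<le> 0" using KU U(2) assms(2) by blast
  have "x \<in> K" if "norm (x - p) \<le> \<delta>" "g p \<bullet> (x - p) + (L + 1) * (norm (x - p))\<^sup>2 \<le> 0" for x
  proof -
    have x: "x \<in> cball p \<delta>" using that(1) by (simp add: dist_norm norm_minus_commute)
    have "\<forall>y\<in>cball p \<delta>. (f has_derivative (\<lambda>h. g y \<bullet> h)) (at y)" using der \<delta>(2) by blast
    then have "f x \<le> f p + g p \<bullet> (x - p) + L * (norm (x - p))\<^sup>2"
      by (rule quadratic_bound_of_lipschitz_gradient[OF _ lip \<open>L \<ge> 0\<close> x])
    also have "\<dots> \<le> 0"
    proof -
      have "(L + 1) * (norm (x - p))\<^sup>2 = L * (norm (x - p))\<^sup>2 + (norm (x - p))\<^sup>2"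
        by (simp add: distrib_right)
      then show ?thesis using that(2) \<open>f p \<le> 0\<close> zero_le_power2[of "norm (x - p)"] by linarith
    qed
    finally show ?thesis using KU x \<delta>(2) by blast
  qed
  moreover have "g p \<noteq> 0" using der_nz U(2) by blast
  ultimately show ?thesis using \<delta>(1) \<open>L \<ge> 0\<close> by (intro that[of "g p" \<delta> "L + 1"]) auto
qed

lemma touching_cball_local_quadratic_normal:
  assumes "touching_cball K p \<eta> R" "G \<noteq> 0" "\<delta> > 0" "L > 0"
    and inK: "\<And>x. norm (x - p) \<le> \<delta> \<Longrightarrow> G \<bullet> (x - p) + L * (norm (x - p))\<^sup>2 \<le> 0 \<Longrightarrow> x \<in> K"
  shows "\<exists>\<mu>>0. G = \<mu> *\<^sub>R \<eta>"
proof (rule open_halfspace_subset_imp_pos_multiple)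
  fix v assume v: "G \<bullet> v < 0"
  then have "norm v > 0" by auto
  define \<epsilon> where "\<epsilon> = min (\<delta> / norm v) (- (G \<bullet> v) / (L * (norm v)\<^sup>2))"
  have \<epsilon>: "\<epsilon> > 0" using assms(3,4) v \<open>norm v > 0\<close> by (simp add: \<epsilon>_def divide_neg_pos)
  have "\<epsilon> \<le> \<delta> / norm v" "\<epsilon> \<le> - (G \<bullet> v) / (L * (norm v)\<^sup>2)" by (simp_all add: \<epsilon>_def)
  then have small: "\<epsilon> * norm v \<le> \<delta>" "\<epsilon> * (L * (norm v)\<^sup>2) \<le> - (G \<bullet> v)"
    using assms(4) \<open>norm v > 0\<close> by (simp_all add: field_simps)
  then have "norm (\<epsilon> *\<^sub>R v) \<le> \<delta>" using \<epsilon> by simp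
  moreover have "G \<bullet> (\<epsilon> *\<^sub>R v) + L * (norm (\<epsilon> *\<^sub>R v))\<^sup>2 = \<epsilon> * (G \<bullet> v + \<epsilon> * (L * (norm v)\<^sup>2))"
    using \<epsilon> by (simp add: power2_eq_square algebra_simps)
  then have "G \<bullet> (\<epsilon> *\<^sub>R v) + L * (norm (\<epsilon> *\<^sub>R v))\<^sup>2 \<le> 0"
    using \<epsilon> small(2) by (simp add: mult_nonneg_nonpos)
  ultimately have "p + \<epsilon> *\<^sub>R v \<in> K" using inK[of "p + \<epsilon> *\<^sub>R v"] by simp
  from touching_cball_inner_le[OF assms(1) this] have "\<epsilon> * (v \<bullet> \<eta>) \<le> 0" by simp
  then show "v \<bullet> \<eta> \<le> 0" using \<epsilon> by (simp add: mult_le_0_iff)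
qed (use assms in \<open>auto simp: touching_cball_def\<close>)

lemma paraboloid_contains_discs:
  fixes \<eta> :: "'a::real_inner"
  assumes "norm \<eta> = 1" "\<mu> > 0" "\<delta> > 0" "L > 0"
    and inK: "\<And>x. norm (x - p) \<le> \<delta> \<Longrightarrow> \<mu> * ((x - p) \<bullet> \<eta>) + L * (norm (x - p))\<^sup>2 \<le> 0 \<Longrightarrow> x \<in> K"
  shows "\<exists>s0>0. \<exists>\<kappa>>0. \<forall>s y. 0 < s \<longrightarrow> s < s0 \<longrightarrow> y \<bullet> \<eta> = 0 \<longrightarrow> norm y \<le> sqrt (\<kappa> * s)
           \<longrightarrow> p - s *\<^sub>R \<eta> + y \<in> K"
proof -
  define \<kappa> where "\<kappa> = \<mu> / (4 * L)"
  define s0 where "s0 = min 1 (min (\<delta>\<^sup>2 / (1 + \<kappa>)) (\<mu> / (2 * L)))"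
  have "\<kappa> > 0" using assms by (simp add: \<kappa>_def)
  moreover have "s0 > 0" using assms \<open>\<kappa> > 0\<close> by (simp add: s0_def)
  moreover have "p - s *\<^sub>R \<eta> + y \<in> K"
    if s: "0 < s" "s < s0" and y: "y \<bullet> \<eta> = 0" "norm y \<le> sqrt (\<kappa> * s)" for s y
  proof -
    have s0: "s < 1" "s < \<delta>\<^sup>2 / (1 + \<kappa>)" "s < \<mu> / (2 * L)" using s(2) by (simp_all add: s0_def)
    have "(norm y)\<^sup>2 \<le> (sqrt (\<kappa> * s))\<^sup>2" using y(2) by (simp add: power_mono)
    then have yy: "(norm y)\<^sup>2 \<le> \<kappa> * s" using \<open>\<kappa> > 0\<close> s(1) by simp
    have n: "(norm ((p - s *\<^sub>R \<eta> + y) - p))\<^sup>2 = (norm y)\<^sup>2 + s\<^sup>2"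
      using norm_add_scaleR_unit_square[OF assms(1), of y "- s"] y(1) by (simp add: algebra_simps)
    have "s\<^sup>2 \<le> s" using s(1) s0(1) by (simp add: power2_eq_square mult_left_le_one_le)
    then have "(norm ((p - s *\<^sub>R \<eta> + y) - p))\<^sup>2 < \<delta>\<^sup>2"
      using n yy s0(2) \<open>\<kappa> > 0\<close> by (simp add: field_simps)
    then have "norm ((p - s *\<^sub>R \<eta> + y) - p) \<le> \<delta>"
      using assms(3) by (simp add: power_less_imp_less_base less_imp_le)
    moreover have "\<mu> * (((p - s *\<^sub>R \<eta> + y) - p) \<bullet> \<eta>) = - (\<mu> * s)"
      using y(1) assms(1) by (simp add: inner_diff_left dot_square_norm)
    moreover have "L * s\<^sup>2 \<le> \<mu> * s / 2" "L * (norm y)\<^sup>2 \<le> \<mu> * s / 4"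
      using s(1) s0(3) assms(2,4) yy by (simp_all add: \<kappa>_def power2_eq_square field_simps)
    moreover have "L * (norm ((p - s *\<^sub>R \<eta> + y) - p))\<^sup>2 = L * (norm y)\<^sup>2 + L * s\<^sup>2"
      unfolding n by (simp add: distrib_left)
    ultimately show ?thesis
      using inK[of "p - s *\<^sub>R \<eta> + y"] mult_pos_pos[OF assms(2) s(1)] by linarith
  qed
  ultimately show ?thesis by blast
qed

lemma smooth_boundary_touching_cball_discs:
  assumes "smooth_boundary K" "touching_cball K p \<eta> R"
  shows "\<exists>s0>0. \<exists>\<kappa>>0. \<forall>s y. 0 < s \<longrightarrow> s < s0 \<longrightarrow> y \<bullet> \<eta> = 0 \<longrightarrow> norm y \<le> sqrt (\<kappa> * s)
           \<longrightarrow> p - s *\<^sub>R \<eta> + y \<in> K"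
proof -
  have "p \<in> K" using assms(2) by (simp add: touching_cball_def)
  then obtain G \<delta> L where GL: "G \<noteq> 0" "\<delta> > 0" "L > 0"
    and inK: "\<And>x. norm (x - p) \<le> \<delta> \<Longrightarrow> G \<bullet> (x - p) + L * (norm (x - p))\<^sup>2 \<le> 0 \<Longrightarrow> x \<in> K"
    using smooth_boundary_local_quadratic[OF assms(1) _ touching_cball_frontier[OF assms(2)]] by blast
  obtain \<mu> where \<mu>: "\<mu> > 0" "G = \<mu> *\<^sub>R \<eta>"
    using touching_cball_local_quadratic_normal[OF assms(2) GL inK] by blast
  show ?thesis
  proof (rule paraboloid_contains_discs[where \<mu> = \<mu> and \<delta> = \<delta> and L = L])
    fix x assume "norm (x - p) \<le> \<delta>" "\<mu> * ((x - p) \<bullet> \<eta>) + L * (norm (x - p))\<^sup>2 \<le> 0"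
    then show "x \<in> K" using inK \<mu>(2) by (simp add: inner_commute)
  qed (use assms(2) GL \<mu>(1) in \<open>auto simp: touching_cball_def\<close>)
qed

section \<open>Sections near a touching point\<close>

lemma touching_cball_levels_in_interval:
  fixes K :: "'a::euclidean_space set"
  assumes "compact K" "smooth_boundary K" "touching_cball K p \<eta> R" "\<xi> = \<eta> \<or> \<xi> = - \<eta>"
  shows "eventually (\<lambda>s. (p - s *\<^sub>R \<eta>) \<bullet> \<xi> \<in> {supp_minus K \<xi> <..< supp_plus K \<xi>}) (at_right 0)"
proof -
  obtain s0 \<kappa> where "s0 > 0" "\<kappa> > 0"
    and discs: "\<forall>s y. 0 < s \<longrightarrow> s < s0 \<longrightarrow> y \<bullet> \<eta> = 0 \<longrightarrow> norm y \<le> sqrt (\<kappa> * s) \<longrightarrow> p - s *\<^sub>R \<eta> + y \<in> K"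
    using smooth_boundary_touching_cball_discs[OF assms(2,3)] by blast
  have \<eta>\<xi>: "\<eta> \<bullet> \<xi> = 1 \<or> \<eta> \<bullet> \<xi> = -1"
    using assms(3,4) by (auto simp: touching_cball_def dot_square_norm)
  have "(p - s *\<^sub>R \<eta>) \<bullet> \<xi> \<in> {supp_minus K \<xi> <..< supp_plus K \<xi>}" if "0 < s" "s < s0 / 2" for s
  proof -
    have "p - (2 * s) *\<^sub>R \<eta> \<in> K" using discs[rule_format, of "2 * s" 0] that \<open>\<kappa> > 0\<close> by simp
    moreover have "p \<in> K" using assms(3) by (simp add: touching_cball_def)
    ultimately have "supp_minus K \<xi> \<le> p \<bullet> \<xi> - 2 * s * (\<eta> \<bullet> \<xi>)" "p \<bullet> \<xi> - 2 * s * (\<eta> \<bullet> \<xi>) \<le> supp_plus K \<xi>"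
      "supp_minus K \<xi> \<le> p \<bullet> \<xi>" "p \<bullet> \<xi> \<le> supp_plus K \<xi>"
      using inner_le_supp_plus[OF assms(1)] supp_minus_le_inner[OF assms(1)]
      by (fastforce simp: inner_diff_left)+
    then show ?thesis using \<eta>\<xi> that(1) by (auto simp: inner_diff_left)
  qed
  moreover have "eventually (\<lambda>s. s \<in> {0 <..< s0 / 2}) (at_right (0::real))"
    using \<open>s0 > 0\<close> by (intro eventually_at_right_real) simp
  ultimately show ?thesis by (auto elim: eventually_mono)
qed

lemma square_power: "(x ^ n)\<^sup>2 = (x\<^sup>2) ^ n" for x :: "'a::monoid_mult"
  by (metis power_mult mult.commute)

lemma section_area_bounds_at_touching_cball:
  fixes K :: "(real^'n) set"
  assumes "compact K" "smooth_boundary K" "touching_cball K p \<eta> R" "\<xi> = \<eta> \<or> \<xi> = - \<eta>"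
  shows "\<exists>c1>0. \<exists>c2. eventually (\<lambda>s. c1 * s ^ (CARD('n) - 1) \<le> (section_area K \<xi> ((p - s *\<^sub>R \<eta>) \<bullet> \<xi>))\<^sup>2
           \<and> (section_area K \<xi> ((p - s *\<^sub>R \<eta>) \<bullet> \<xi>))\<^sup>2 \<le> c2 * s ^ (CARD('n) - 1)) (at_right 0)"
proof -
  obtain s0 \<kappa> where "s0 > 0" "\<kappa> > 0"
    and discs: "\<forall>s y. 0 < s \<longrightarrow> s < s0 \<longrightarrow> y \<bullet> \<eta> = 0 \<longrightarrow> norm y \<le> sqrt (\<kappa> * s) \<longrightarrow> p - s *\<^sub>R \<eta> + y \<in> K"
    using smooth_boundary_touching_cball_discs[OF assms(2,3)] by blast
  have \<eta>: "norm \<eta> = 1" and \<xi>: "norm \<xi> = 1" and R: "R > 0"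
    using assms(3,4) by (auto simp: touching_cball_def)
  have same_level: "x \<bullet> \<xi> = y \<bullet> \<xi> \<longleftrightarrow> x \<bullet> \<eta> = y \<bullet> \<eta>" for x y using assms(4) by auto
  define N where "N = CARD('n) - 1"
  define A where "A s = section_area K \<xi> ((p - s *\<^sub>R \<eta>) \<bullet> \<xi>)" for s
  have "(4 * \<kappa> / (CARD('n))\<^sup>2) ^ N * s ^ N \<le> (A s)\<^sup>2 \<and> (A s)\<^sup>2 \<le> (8 * R) ^ N * s ^ N"
    if s: "0 < s" "s < s0" for s
  proof
    have lower: "(2 * (sqrt (\<kappa> * s) / CARD('n))) ^ N \<le> A s"
      unfolding A_def N_def using discs s \<open>\<kappa> > 0\<close> same_level[of _ 0]
      by (intro section_area_ge[OF assms(1) \<xi>]) auto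
    have "(4 * \<kappa> / (CARD('n))\<^sup>2) ^ N * s ^ N = ((2 * (sqrt (\<kappa> * s) / CARD('n)))\<^sup>2) ^ N"
      using s \<open>\<kappa> > 0\<close> by (simp add: power_divide power_mult_distrib)
    also have "\<dots> = ((2 * (sqrt (\<kappa> * s) / CARD('n))) ^ N)\<^sup>2" by (rule square_power[symmetric])
    also have "\<dots> \<le> (A s)\<^sup>2" using lower s \<open>\<kappa> > 0\<close> by (intro power_mono) auto
    finally show "(4 * \<kappa> / (CARD('n))\<^sup>2) ^ N * s ^ N \<le> (A s)\<^sup>2" .
    have depth: "(x - p) \<bullet> \<eta> = - s" if "x \<bullet> \<xi> = (p - s *\<^sub>R \<eta>) \<bullet> \<xi>" for x
    proof -
      have "x \<bullet> \<eta> = (p - s *\<^sub>R \<eta>) \<bullet> \<eta>" using that same_level by blast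
      then show ?thesis using \<eta> by (simp add: inner_diff_left dot_square_norm)
    qed
    have upper: "A s \<le> (2 * sqrt (2 * R * s)) ^ N"
      unfolding A_def N_def using s R depth
      by (intro section_area_le[OF assms(1) \<xi>] touching_cball_section_radius[OF assms(3)]) auto
    have "(A s)\<^sup>2 \<le> ((2 * sqrt (2 * R * s)) ^ N)\<^sup>2"
      using upper by (intro power_mono) (simp_all add: A_def section_area_nonneg)
    also have "\<dots> = ((2 * sqrt (2 * R * s))\<^sup>2) ^ N" by (rule square_power)
    also have "\<dots> = (8 * R) ^ N * s ^ N" using s R by (simp add: power_mult_distrib)
    finally show "(A s)\<^sup>2 \<le> (8 * R) ^ N * s ^ N" .
  qed
  moreover have "eventually (\<lambda>s. s \<in> {0 <..< s0}) (at_right (0::real))"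
    using \<open>s0 > 0\<close> by (intro eventually_at_right_real) simp
  ultimately have "eventually (\<lambda>s. (4 * \<kappa> / (CARD('n))\<^sup>2) ^ N * s ^ N \<le> (A s)\<^sup>2
      \<and> (A s)\<^sup>2 \<le> (8 * R) ^ N * s ^ N) (at_right 0)"
    by (auto elim: eventually_mono)
  moreover have "(4 * \<kappa> / (CARD('n))\<^sup>2) ^ N > 0" using \<open>\<kappa> > 0\<close> by simp
  ultimately show ?thesis unfolding A_def N_def by blast
qed

lemma poly_vanishes_at_touching_level:
  fixes K :: "(real^'n) set" and q P :: "real poly"
  assumes "odd (CARD('n) - 1)" "compact K" "smooth_boundary K" "touching_cball K p \<eta> R" "\<xi> = \<eta> \<or> \<xi> = - \<eta>"
    and area: "(\<forall>t\<in>{supp_minus K \<xi> <..< supp_plus K \<xi>}. section_area K \<xi> t = sqrt (poly q t) * poly P t)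
      \<or> (\<forall>t\<in>{supp_minus K \<xi> <..< supp_plus K \<xi>}. section_area K \<xi> t = poly P t / sqrt (poly q t))"
  shows "poly q (p \<bullet> \<xi>) = 0"
proof (rule ccontr)
  assume q0: "poly q (p \<bullet> \<xi>) \<noteq> 0"
  \<comment> \<open>No sign condition on q is needed: sqrt is continuous on all of the reals and
    vanishes only at 0.\<close>
  have "\<exists>u. (\<forall>t\<in>{supp_minus K \<xi> <..< supp_plus K \<xi>}. section_area K \<xi> t = u t * poly P t)
      \<and> isCont u (p \<bullet> \<xi>) \<and> u (p \<bullet> \<xi>) \<noteq> 0"
    using area
  proof (elim disjE)
    assume "\<forall>t\<in>{supp_minus K \<xi> <..< supp_plus K \<xi>}. section_area K \<xi> t = sqrt (poly q t) * poly P t"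
    then show ?thesis using q0 by (intro exI[of _ "\<lambda>t. sqrt (poly q t)"]) (auto intro!: continuous_intros)
  next
    assume "\<forall>t\<in>{supp_minus K \<xi> <..< supp_plus K \<xi>}. section_area K \<xi> t = poly P t / sqrt (poly q t)"
    then show ?thesis using q0
      by (intro exI[of _ "\<lambda>t. inverse (sqrt (poly q t))"]) (auto simp: divide_inverse intro!: continuous_intros)
  qed
  then obtain u where u: "\<forall>t\<in>{supp_minus K \<xi> <..< supp_plus K \<xi>}. section_area K \<xi> t = u t * poly P t"
    "isCont u (p \<bullet> \<xi>)" "u (p \<bullet> \<xi>) \<noteq> 0"
    by blast
  define \<sigma> where "\<sigma> = \<eta> \<bullet> \<xi>"
  define P' where "P' = pcompose P [:p \<bullet> \<xi>, - \<sigma>:]"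
  have level: "(p - s *\<^sub>R \<eta>) \<bullet> \<xi> = p \<bullet> \<xi> - \<sigma> * s" for s by (simp add: \<sigma>_def inner_diff_left)
  have P': "poly P' s = poly P ((p - s *\<^sub>R \<eta>) \<bullet> \<xi>)" for s
    unfolding level P'_def by (simp add: poly_pcompose algebra_simps)
  have "((\<lambda>s. p \<bullet> \<xi> - \<sigma> * s) \<longlongrightarrow> p \<bullet> \<xi>) (at_right 0)"
    by (rule tendsto_eq_intros refl)+ simp
  then have lim: "((\<lambda>s. u ((p - s *\<^sub>R \<eta>) \<bullet> \<xi>)) \<longlongrightarrow> u (p \<bullet> \<xi>)) (at_right 0)"
    unfolding level by (rule isCont_tendsto_compose[OF u(2)])
  obtain c1 c2 where "c1 > 0" and bounds: "eventually (\<lambda>s. c1 * s ^ (CARD('n) - 1)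
      \<le> (section_area K \<xi> ((p - s *\<^sub>R \<eta>) \<bullet> \<xi>))\<^sup>2 \<and>
      (section_area K \<xi> ((p - s *\<^sub>R \<eta>) \<bullet> \<xi>))\<^sup>2 \<le> c2 * s ^ (CARD('n) - 1)) (at_right 0)"
    using section_area_bounds_at_touching_cball[OF assms(2-5)] by blast
  have "eventually (\<lambda>s. c1 * s ^ (CARD('n) - 1) \<le> (u ((p - s *\<^sub>R \<eta>) \<bullet> \<xi>) * poly P' s)\<^sup>2 \<and>
      (u ((p - s *\<^sub>R \<eta>) \<bullet> \<xi>) * poly P' s)\<^sup>2 \<le> c2 * s ^ (CARD('n) - 1)) (at_right 0)"
    using bounds touching_cball_levels_in_interval[OF assms(2-5)]
    by eventually_elim (use u(1) in \<open>simp add: P'\<close>)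
  then have "CARD('n) - 1 = 2 * order 0 P'"
    by (rule order_eq_of_power_bounds[OF \<open>c1 > 0\<close> lim u(3)])
  then show False using assms(1) by simp
qed

lemma support_levels_are_roots:
  fixes K :: "(real^'n) set" and P q :: "real^'n \<Rightarrow> real poly"
  assumes "odd (CARD('n) - 1)" "compact K" "K \<noteq> {}" "smooth_boundary K"
    and q_cont: "\<And>k. continuous_on (sphere 0 1) (\<lambda>\<xi>. coeff (q \<xi>) k)"
    and q_deg: "\<And>\<xi>. \<xi> \<in> sphere 0 1 \<Longrightarrow> degree (q \<xi>) \<le> d"
    and area: "\<And>\<xi>. \<xi> \<in> sphere 0 1 \<Longrightarrow>
      (\<forall>t\<in>{supp_minus K \<xi> <..< supp_plus K \<xi>}. section_area K \<xi> t = sqrt (poly (q \<xi>) t) * poly (P \<xi>) t)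
      \<or> (\<forall>t\<in>{supp_minus K \<xi> <..< supp_plus K \<xi>}. section_area K \<xi> t = poly (P \<xi>) t / sqrt (poly (q \<xi>) t))"
    and "\<xi> \<in> sphere 0 1"
  shows "poly (q \<xi>) (supp_plus K \<xi>) = 0" "poly (q \<xi>) (supp_minus K \<xi>) = 0"
proof -
  have touching: "poly (q \<xi>) (p \<bullet> \<xi>) = 0" if "touching_cball K p \<eta> R" "\<xi> = \<eta> \<or> \<xi> = - \<eta>" for \<xi> p \<eta> R
  proof -
    have "\<xi> \<in> sphere 0 1" using that by (auto simp: touching_cball_def)
    then show ?thesis by (rule poly_vanishes_at_touching_level[OF assms(1,2,4) that area])
  qed
  show "poly (q \<xi>) (supp_plus K \<xi>) = 0"
  proof (rule vanishes_on_sphere_if_vanishes_at_touching[OF assms(2,3) _ _ assms(8)])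
    show "continuous_on (sphere 0 1) (\<lambda>\<xi>. poly (q \<xi>) (supp_plus K \<xi>))"
      by (rule continuous_on_poly_bounded_degree[OF q_cont q_deg continuous_on_supp_plus[OF assms(2,3)]])
    show "poly (q \<zeta>) (supp_plus K \<zeta>) = 0" if "touching_cball K p \<zeta> R" for \<zeta> p R
      using touching[OF that] supp_plus_touching_cball[OF that] by simp
  qed
  have "poly (q (- (- \<xi>))) (supp_minus K (- (- \<xi>))) = 0"
  proof (rule vanishes_on_sphere_if_vanishes_at_touching[where
        \<phi> = "\<lambda>\<zeta>. poly (q (- \<zeta>)) (supp_minus K (- \<zeta>))" and \<xi> = "- \<xi>", OF assms(2,3)])
    show "continuous_on (sphere 0 1) (\<lambda>\<zeta>. poly (q (- \<zeta>)) (supp_minus K (- \<zeta>)))"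
      by (intro continuous_on_compose2[OF continuous_on_poly_bounded_degree[OF q_cont q_deg
            continuous_on_supp_minus[OF assms(2,3)]]] continuous_intros) auto
    show "poly (q (- \<zeta>)) (supp_minus K (- \<zeta>)) = 0" if "touching_cball K p \<zeta> R" for \<zeta> p R
      using touching[OF that, of "- \<zeta>"] supp_minus_touching_cball[of K p "- \<zeta>" R] that by simp
  qed (use assms(8) in simp)
  then show "poly (q \<xi>) (supp_minus K \<xi>) = 0" by simp
qed

theorem lemma2p2:
  fixes K :: "(real^'n) set"
    and P q :: "real^'n \<Rightarrow> real poly"
  assumes n2: "CARD('n) \<ge> 2" and n_even: "even CARD('n)"
    and body: "convex_body K"
    and smooth: "smooth_boundary K"
    and P_cont: "\<And>k. continuous_on (sphere 0 1) (\<lambda>\<xi>. coeff (P \<xi>) k)"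
    and q_cont: "\<And>k. continuous_on (sphere 0 1) (\<lambda>\<xi>. coeff (q \<xi>) k)"
    and q_deg: "\<And>\<xi>. \<xi> \<in> sphere 0 1 \<Longrightarrow> degree (q \<xi>) = 2"
    and q_pos: "\<And>\<xi> t. \<xi> \<in> sphere 0 1 \<Longrightarrow> t \<in> {supp_minus K \<xi> <..< supp_plus K \<xi>}
                  \<Longrightarrow> poly (q \<xi>) t > 0"
    and A_form:
      "(\<forall>\<xi>\<in>sphere 0 1. \<forall>t\<in>{supp_minus K \<xi> <..< supp_plus K \<xi>}.
          section_area K \<xi> t = sqrt (poly (q \<xi>) t) * poly (P \<xi>) t)
       \<or> (\<forall>\<xi>\<in>sphere 0 1. \<forall>t\<in>{supp_minus K \<xi> <..< supp_plus K \<xi>}.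
          section_area K \<xi> t = poly (P \<xi>) t / sqrt (poly (q \<xi>) t))"
  shows "\<exists>q0 :: real^'n \<Rightarrow> real. \<forall>\<xi>\<in>sphere 0 1. \<forall>t.
           poly (q \<xi>) t = q0 \<xi> * (supp_plus K \<xi> - t) * (t - supp_minus K \<xi>)"
proof (intro exI[of _ "\<lambda>\<xi>. - coeff (q \<xi>) 2"] ballI allI)
  \<comment> \<open>n2 follows from n_even.\<close>
  fix \<xi> :: "real^'n" and t assume \<xi>: "\<xi> \<in> sphere 0 1"
  have K: "compact K" "interior K \<noteq> {}" "K \<noteq> {}"
    using body interior_subset by (auto simp: convex_body_def)
  have "odd (CARD('n) - 1)" using n_even by simp
  moreover have "degree (q \<zeta>) \<le> 2" if "\<zeta> \<in> sphere 0 1" for \<zeta> using q_deg[OF that] by simp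
  moreover have "(\<forall>t\<in>{supp_minus K \<zeta> <..< supp_plus K \<zeta>}. section_area K \<zeta> t = sqrt (poly (q \<zeta>) t) * poly (P \<zeta>) t)
      \<or> (\<forall>t\<in>{supp_minus K \<zeta> <..< supp_plus K \<zeta>}. section_area K \<zeta> t = poly (P \<zeta>) t / sqrt (poly (q \<zeta>) t))"
    if "\<zeta> \<in> sphere 0 1" for \<zeta>
    using A_form that by blast
  ultimately have roots: "poly (q \<xi>) (supp_plus K \<xi>) = 0" "poly (q \<xi>) (supp_minus K \<xi>) = 0"
    using support_levels_are_roots[OF _ K(1,3) smooth q_cont _ _ \<xi>] by blast+
  have "supp_plus K \<xi> \<noteq> supp_minus K \<xi>" using supp_minus_less_supp_plus[OF K(1,2), of \<xi>] \<xi> by force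
  then show "poly (q \<xi>) t = - coeff (q \<xi>) 2 * (supp_plus K \<xi> - t) * (t - supp_minus K \<xi>)"
    by (rule poly_degree_2_eq_roots[OF q_deg[OF \<xi>] roots])
qed

end
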